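(* Assume $V=L$. Let $\xi_0,\xi_1,\xi_2,\dots\in\Xi$, let $\vartheta=\bigcup_n\xi_n$, and let $X_n\in\mathrm{IPS}_{\xi_n}$ ($n<\omega$) satisfy the coherence condition $X_n\restriction(\xi_k\cap\xi_n)=X_k\restriction(\xi_k\cap\xi_n)$ for all $k,n$. Then $X=\bigcap_n(X_n\uparrow\vartheta)$ belongs to $\mathrm{IPS}_\vartheta$ and $X\restriction\xi_n=X_n$ for all $n$. In particular, if the sets $\xi_0,\xi_1,\dots$ are pairwise disjoint, then the coherence condition holds automatically, so $X=\bigcap_n(X_n\uparrow\vartheta)\in\mathrm{IPS}_\vartheta$ and $X\restriction\xi_n=X_n$ for all $n$.
   Context: $T$ is the set of all nonempty finite sequences of countable ordinals, ordered by strict extension $\subset$. $\Xi$ is the set of all at most countable $\xi\subseteq T$ closed downward under $\subset$. $D=2^\omega$; $D^\xi$ is the product of $\xi$ copies of $D$ (with $D^\varnothing=\{\varnothing\}$). For $\eta\subseteq\xi$ in $\Xi$: $x\restriction\eta$ is restriction of $x\in D^\xi$, $X\restriction\eta=\{x\restriction\eta:x\in X\}$, and $Y\uparrow\xi=\{x\in D^\xi:x\restriction\eta\in Y\}$ for $Y\subseteq D^\eta$. For $\zeta\in\Xi$, $\mathrm{IPS}_\zeta$ is the set of all $X\subseteq D^\zeta$ for which there is a homeomorphism $H$ of $D^\zeta$ onto $X$ such that for all $x_0,x_1\in D^\zeta$ and all $\xi\in\Xi$, $\xi\subseteq\zeta$: $x_0\restriction\xi=x_1\restriction\xi\iff H(x_0)\restriction\xi=H(x_1)\restriction\xi$.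 *)

theory Defs
  imports "HOL-Analysis.Analysis"
begin

text \<open>Nodes of the tree T: nonempty finite sequences (lists) of labels of type 'a
  (in the paper: countable ordinals). Strict extension = proper prefix.\<close>

definition T :: "'a list set" where
  "T = {s. s \<noteq> []}"

definition Xi :: "'a list set set" where
  "Xi = {\<xi>. \<xi> \<subseteq> T \<and> countable \<xi> \<and>
              (\<forall>s t. t \<in> \<xi> \<longrightarrow> s \<in> T \<longrightarrow> (\<exists>u. u \<noteq> [] \<and> t = s @ u) \<longrightarrow> s \<in> \<xi>)}"

definition Dtop :: "(nat \<Rightarrow> bool) topology" where
  "Dtop = product_topology (\<lambda>_. discrete_topology (UNIV :: bool set)) UNIV"

definition cube :: "'a list set \<Rightarrow> ('a list \<Rightarrow> nat \<Rightarrow> bool) topology" where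
  "cube \<xi> = product_topology (\<lambda>_. Dtop) \<xi>"

definition restr_set :: "('a list \<Rightarrow> nat \<Rightarrow> bool) set \<Rightarrow> 'a list set
    \<Rightarrow> ('a list \<Rightarrow> nat \<Rightarrow> bool) set" where
  "restr_set X \<eta> = (\<lambda>x. restrict x \<eta>) ` X"

definition lift_set :: "('a list \<Rightarrow> nat \<Rightarrow> bool) set \<Rightarrow> 'a list set \<Rightarrow> 'a list set
    \<Rightarrow> ('a list \<Rightarrow> nat \<Rightarrow> bool) set" where
  "lift_set Y \<eta> \<xi> = {x \<in> topspace (cube \<xi>). restrict x \<eta> \<in> Y}"

definition IPS :: "'a list set \<Rightarrow> ('a list \<Rightarrow> nat \<Rightarrow> bool) set set" where
  "IPS \<zeta> = {X. X \<subseteq> topspace (cube \<zeta>) \<and>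
     (\<exists>H. homeomorphic_map (cube \<zeta>) (subtopology (cube \<zeta>) X) H \<and>
        (\<forall>x0\<in>topspace (cube \<zeta>). \<forall>x1\<in>topspace (cube \<zeta>). \<forall>\<xi>\<in>Xi. \<xi> \<subseteq> \<zeta> \<longrightarrow>
           (restrict x0 \<xi> = restrict x1 \<xi> \<longleftrightarrow> restrict (H x0) \<xi> = restrict (H x1) \<xi>)))}"

end

theory Submission
  imports Defs "HOL-Library.Sublist"
begin

text \<open>
  The argument uses no set-theoretic hypothesis such as V = L.

  Let H witness X \<in> IPS \<zeta>. Applying the defining property of H to the finite sets
  below s (the nonempty prefixes of s) shows that (H x) s depends only on x below s, and
  restricting H gives a homeomorphism of D^A onto X restricted to A, for every A \<in> Xi
  inside \<zeta>. Hence, once the values strictly below s are fixed at an admissible y, the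
  possible values at s are those of an injective, continuously varying map d \<mapsto> fiber s y d,
  and X consists of the points whose restriction below every node lies in the corresponding
  restriction of X.

  For a coherent family, all X_n with s \<in> \<xi>_n have the same restriction below s. So a map
  H on D^\<theta>, \<theta> the union of the \<xi>_n, can be defined by recursion on the length of s: its
  value at s is the fibre map of some X_n with s \<in> \<xi>_n, applied to the values already
  constructed below s and to x s. Induction along prefixes shows that H maps into X, onto X,
  and preserves and reflects equality of restrictions to every member of Xi; as a continuous
  injection of the compact space D^\<theta> it is a homeomorphism onto X, and X restricted to
  \<xi>_n is X_n.
\<close>

definition below :: "'a list \<Rightarrow> 'a list set" where
  "below s = {t. t \<noteq> [] \<and> prefix t s}"

definition strictly_below :: "'a list \<Rightarrow> 'a list set" where
  "strictly_below s = {t. t \<noteq> [] \<and> strict_prefix t s}"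

lemma self_in_below: "s \<noteq> [] \<Longrightarrow> s \<in> below s"
  by (simp add: below_def)

lemma below_eq_insert: "s \<noteq> [] \<Longrightarrow> below s = insert s (strictly_below s)"
  by (auto simp: below_def strictly_below_def strict_prefix_def)

lemma not_in_strictly_below: "s \<notin> strictly_below s"
  by (simp add: strictly_below_def)

lemma strictly_below_subset_below: "strictly_below s \<subseteq> below s"
  by (auto simp: below_def strictly_below_def strict_prefix_def)

lemma below_subset_below: "t \<in> below s \<Longrightarrow> below t \<subseteq> below s"
  by (auto simp: below_def intro: prefix_order.trans)

lemma below_subset_strictly_below: "t \<in> strictly_below s \<Longrightarrow> below t \<subseteq> strictly_below s"
  by (auto simp: below_def strictly_below_def
      intro: prefix_order.le_less_trans)

lemma length_strictly_below: "t \<in> strictly_below s \<Longrightarrow> length t < length s"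
  by (simp add: strictly_below_def prefix_length_less)

lemma strictly_below_induct [case_names below]:
  assumes "\<And>s. (\<And>t. t \<in> strictly_below s \<Longrightarrow> P t) \<Longrightarrow> P s"
  shows "P s"
  by (induction s rule: measure_induct_rule[where f = length])
    (use assms length_strictly_below in blast)

lemma finite_below: "finite (below s)"
  by (rule finite_subset[of _ "set (prefixes s)"]) (auto simp: below_def)

lemma strict_prefix_iff_append: "strict_prefix s t \<longleftrightarrow> (\<exists>u. u \<noteq> [] \<and> t = s @ u)"
  by (auto simp: strict_prefix_def prefix_def)

lemma Xi_iff:
  "\<xi> \<in> Xi \<longleftrightarrow> countable \<xi> \<and> [] \<notin> \<xi> \<and>
     (\<forall>t\<in>\<xi>. \<forall>s. s \<noteq> [] \<and> strict_prefix s t \<longrightarrow> s \<in> \<xi>)"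
  unfolding Xi_def T_def strict_prefix_iff_append by blast

lemma Xi_nonempty_node: "\<xi> \<in> Xi \<Longrightarrow> s \<in> \<xi> \<Longrightarrow> s \<noteq> []"
  by (auto simp: Xi_iff)

lemma Xi_below_subset: "\<xi> \<in> Xi \<Longrightarrow> s \<in> \<xi> \<Longrightarrow> below s \<subseteq> \<xi>"
  unfolding Xi_iff below_def using prefix_order.le_less by blast

lemma below_in_Xi: "below s \<in> Xi"
proof -
  have "r \<in> below s" if "t \<in> below s" "r \<noteq> []" "strict_prefix r t" for r t
  proof -
    have "r \<in> below t"
      using that(2,3) by (simp add: below_def prefix_order.less_imp_le)
    then show ?thesis
      using below_subset_below[OF that(1)] by blast
  qed
  then show ?thesis
    using countable_finite[OF finite_below] by (auto simp: Xi_iff below_def)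
qed

lemma strictly_below_in_Xi: "strictly_below s \<in> Xi"
proof -
  have "r \<in> strictly_below s" if "t \<in> strictly_below s" "r \<noteq> []" "strict_prefix r t" for r t
  proof -
    have "r \<in> below t"
      using that(2,3) by (simp add: below_def prefix_order.less_imp_le)
    then show ?thesis
      using below_subset_strictly_below[OF that(1)] by blast
  qed
  then show ?thesis
    using countable_subset[OF strictly_below_subset_below countable_finite[OF finite_below]]
    by (auto simp: Xi_iff strictly_below_def)
qed

lemma UN_in_Xi:
  fixes \<xi>s :: "nat \<Rightarrow> 'a list set"
  assumes "\<And>n. \<xi>s n \<in> Xi"
  shows "(\<Union>n. \<xi>s n) \<in> Xi"
proof -
  have "countable (\<Union>n. \<xi>s n)"
    using assms by (intro countable_UN) (auto simp: Xi_iff)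
  then show ?thesis
    using assms by (auto simp: Xi_iff)
qed

lemma restrict_eq_subset:
  "B \<subseteq> A \<Longrightarrow> restrict x A = restrict y A \<Longrightarrow> restrict x B = restrict y B"
  by (metis Int_absorb1 restrict_restrict)

lemma restrict_insert_eq_iff:
  "restrict x (insert s A) = restrict y (insert s A) \<longleftrightarrow> restrict x A = restrict y A \<and> x s = y s"
  by (auto simp: restrict_def fun_eq_iff)

lemma restrict_below_eq_iff:
  "s \<noteq> [] \<Longrightarrow> restrict x (below s) = restrict y (below s) \<longleftrightarrow>
     restrict x (strictly_below s) = restrict y (strictly_below s) \<and> x s = y s"
  by (simp add: below_eq_insert restrict_insert_eq_iff)

lemma restrict_eq_iff_below:
  assumes "\<xi> \<in> Xi"
  shows "restrict x \<xi> = restrict y \<xi> \<longleftrightarrow> (\<forall>s\<in>\<xi>. restrict x (below s) = restrict y (below s))"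
proof
  assume "restrict x \<xi> = restrict y \<xi>"
  then have "x t = y t" if "t \<in> \<xi>" for t
    using that by (metis restrict_apply')
  then show "\<forall>s\<in>\<xi>. restrict x (below s) = restrict y (below s)"
    using Xi_below_subset[OF assms] by (auto intro!: restrict_ext)
next
  assume below_eq: "\<forall>s\<in>\<xi>. restrict x (below s) = restrict y (below s)"
  have "x s = y s" if "s \<in> \<xi>" for s
    using below_eq that below_eq_insert[OF Xi_nonempty_node[OF assms that]]
    by (metis insertI1 restrict_apply')
  then show "restrict x \<xi> = restrict y \<xi>"
    by (auto intro: restrict_ext)
qed

lemma topspace_Dtop [simp]: "topspace Dtop = UNIV"
  by (simp add: Dtop_def)

lemma topspace_cube: "topspace (cube \<xi>) = (\<Pi>\<^sub>E s\<in>\<xi>. UNIV)"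
  by (simp add: cube_def Dtop_def)

lemma restrict_in_cube [simp]: "restrict x \<xi> \<in> topspace (cube \<xi>)"
  by (simp add: topspace_cube)

lemma restrict_cube_self: "x \<in> topspace (cube \<xi>) \<Longrightarrow> restrict x \<xi> = x"
  by (simp add: topspace_cube)

lemma restr_set_self: "X \<subseteq> topspace (cube \<xi>) \<Longrightarrow> restr_set X \<xi> = X"
  by (auto simp: restr_set_def restrict_cube_self subset_iff image_iff)

lemma restr_set_restr_set: "B \<subseteq> A \<Longrightarrow> restr_set (restr_set X A) B = restr_set X B"
  by (simp add: restr_set_def image_image Int_absorb1)

lemma restr_set_empty: "X \<noteq> {} \<Longrightarrow> restr_set X {} = {\<lambda>_. undefined}"
  by (simp add: restr_set_def restrict_def image_constant_conv)

lemma compact_space_cube: "compact_space (cube \<xi>)"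
  by (simp add: cube_def Dtop_def compact_space_product_topology compact_space_discrete_topology)

lemma Hausdorff_space_cube: "Hausdorff_space (cube \<xi>)"
  by (simp add: cube_def Dtop_def Hausdorff_space_product_topology)

lemma continuous_map_cubeI:
  assumes "\<And>x. x \<in> topspace U \<Longrightarrow> f x \<in> extensional A"
    and "\<And>k. k \<in> A \<Longrightarrow> continuous_map U Dtop (\<lambda>x. f x k)"
  shows "continuous_map U (cube A) f"
  using assms by (auto simp: cube_def continuous_map_componentwise)

lemma continuous_map_cube_coordinate: "k \<in> A \<Longrightarrow> continuous_map (cube A) Dtop (\<lambda>x. x k)"
  unfolding cube_def by (rule continuous_map_product_projection)

lemma continuous_map_cube_restrict:
  "A \<subseteq> \<zeta> \<Longrightarrow> continuous_map (cube \<zeta>) (cube A) (\<lambda>x. restrict x A)"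
  by (rule continuous_map_cubeI) (auto intro: continuous_map_cube_coordinate)

lemma continuous_map_cube_fun_upd:
  assumes "continuous_map U (cube \<zeta>) f" "continuous_map U Dtop q" "s \<in> \<zeta>"
  shows "continuous_map U (cube \<zeta>) (\<lambda>x. (f x)(s := q x))"
proof (rule continuous_map_cubeI)
  fix x assume "x \<in> topspace U"
  then show "(f x)(s := q x) \<in> extensional \<zeta>"
    using assms continuous_map_image_subset_topspace
    by (fastforce simp: topspace_cube PiE_def extensional_def)
next
  fix k assume "k \<in> \<zeta>"
  then show "continuous_map U Dtop (\<lambda>x. ((f x)(s := q x)) k)"
    using assms continuous_map_compose[OF assms(1) continuous_map_cube_coordinate]
    by (cases "k = s") (simp_all add: o_def)
qed

lemma homeomorphic_map_cube_onto:
  assumes "continuous_map (cube A) (cube A) f" "inj_on f (topspace (cube A))"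
    and "f ` topspace (cube A) = Y"
  shows "homeomorphic_map (cube A) (subtopology (cube A) Y) f"
proof (rule continuous_imp_homeomorphic_map)
  have "Y \<subseteq> topspace (cube A)"
    using assms(1,3) continuous_map_image_subset_topspace by blast
  then show "f ` topspace (cube A) = topspace (subtopology (cube A) Y)"
    using assms(3) by auto
  show "continuous_map (cube A) (subtopology (cube A) Y) f"
    using assms(1,3) by (auto simp: continuous_map_in_subtopology)
qed (use assms Hausdorff_space_cube Hausdorff_space_subtopology compact_space_cube in auto)

definition cube_extend :: "'a list set \<Rightarrow> 'a list set \<Rightarrow> ('a list \<Rightarrow> nat \<Rightarrow> bool)
    \<Rightarrow> 'a list \<Rightarrow> nat \<Rightarrow> bool" where
  "cube_extend \<zeta> A v = (\<lambda>t\<in>\<zeta>. if t \<in> A then v t else (\<lambda>_. False))"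

lemma cube_extend_in_cube: "cube_extend \<zeta> A v \<in> topspace (cube \<zeta>)"
  by (simp add: cube_extend_def topspace_cube)

lemma restrict_cube_extend: "A \<subseteq> \<zeta> \<Longrightarrow> restrict (cube_extend \<zeta> A v) A = restrict v A"
  by (auto simp: cube_extend_def restrict_def fun_eq_iff)

lemma continuous_map_cube_extend:
  "A \<subseteq> \<zeta> \<Longrightarrow> continuous_map (cube A) (cube \<zeta>) (cube_extend \<zeta> A)"
  by (rule continuous_map_cubeI)
    (auto simp: cube_extend_def intro: continuous_map_cube_coordinate)

section \<open>Witnesses of IPS sets\<close>

definition ips_map :: "'a list set \<Rightarrow> ('a list \<Rightarrow> nat \<Rightarrow> bool) set
    \<Rightarrow> (('a list \<Rightarrow> nat \<Rightarrow> bool) \<Rightarrow> 'a list \<Rightarrow> nat \<Rightarrow> bool) \<Rightarrow> bool" where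
  "ips_map \<zeta> X H \<longleftrightarrow> homeomorphic_map (cube \<zeta>) (subtopology (cube \<zeta>) X) H \<and>
     (\<forall>x0\<in>topspace (cube \<zeta>). \<forall>x1\<in>topspace (cube \<zeta>). \<forall>\<xi>\<in>Xi. \<xi> \<subseteq> \<zeta> \<longrightarrow>
        (restrict x0 \<xi> = restrict x1 \<xi> \<longleftrightarrow> restrict (H x0) \<xi> = restrict (H x1) \<xi>))"

lemma IPS_iff: "X \<in> IPS \<zeta> \<longleftrightarrow> X \<subseteq> topspace (cube \<zeta>) \<and> (\<exists>H. ips_map \<zeta> X H)"
  unfolding IPS_def ips_map_def by blast

locale ips_witness =
  fixes \<zeta> :: "'a list set" and X :: "('a list \<Rightarrow> nat \<Rightarrow> bool) set"
    and H :: "('a list \<Rightarrow> nat \<Rightarrow> bool) \<Rightarrow> 'a list \<Rightarrow> nat \<Rightarrow> bool"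
  assumes Xi: "\<zeta> \<in> Xi" and subset_cube: "X \<subseteq> topspace (cube \<zeta>)" and ips_map: "ips_map \<zeta> X H"
begin

lemma homeomorphic_map: "homeomorphic_map (cube \<zeta>) (subtopology (cube \<zeta>) X) H"
  using ips_map by (simp add: ips_map_def)

lemma H_restrict_eq_iff:
  assumes "x0 \<in> topspace (cube \<zeta>)" "x1 \<in> topspace (cube \<zeta>)" "\<xi> \<in> Xi" "\<xi> \<subseteq> \<zeta>"
  shows "restrict (H x0) \<xi> = restrict (H x1) \<xi> \<longleftrightarrow> restrict x0 \<xi> = restrict x1 \<xi>"
  using ips_map assms by (simp add: ips_map_def)

lemma image_eq: "H ` topspace (cube \<zeta>) = X"
  using homeomorphic_imp_surjective_map[OF homeomorphic_map] subset_cube by auto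

lemma mem: "x \<in> topspace (cube \<zeta>) \<Longrightarrow> H x \<in> X"
  using image_eq by blast

lemma continuous: "continuous_map (cube \<zeta>) (cube \<zeta>) H"
  using homeomorphic_imp_continuous_map[OF homeomorphic_map] continuous_map_into_fulltopology
  by blast

lemma nonempty: "X \<noteq> {}"
  using image_eq cube_extend_in_cube by blast

lemma restr_setE:
  assumes "u \<in> restr_set X A"
  obtains w where "w \<in> topspace (cube \<zeta>)" "u = restrict (H w) A"
  using assms image_eq unfolding restr_set_def by auto

lemma restrict_in_restr_set: "w \<in> topspace (cube \<zeta>) \<Longrightarrow> restrict (H w) A \<in> restr_set X A"
  using mem unfolding restr_set_def by blast

lemma strictly_below_subset: "s \<in> \<zeta> \<Longrightarrow> strictly_below s \<subseteq> \<zeta>"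
  using Xi_below_subset[OF Xi] strictly_below_subset_below by blast

lemma nonempty_node: "s \<in> \<zeta> \<Longrightarrow> s \<noteq> []"
  using Xi_nonempty_node[OF Xi] .

lemma H_restrict_below_eq_iff:
  assumes "x0 \<in> topspace (cube \<zeta>)" "x1 \<in> topspace (cube \<zeta>)" "s \<in> \<zeta>"
  shows "restrict (H x0) (below s) = restrict (H x1) (below s) \<longleftrightarrow>
    restrict x0 (below s) = restrict x1 (below s)"
  using H_restrict_eq_iff[OF assms(1,2) below_in_Xi Xi_below_subset[OF Xi assms(3)]] .

lemma restrict_in_restr_setI:
  assumes A: "A \<in> Xi" "A \<subseteq> \<zeta>"
    and local: "\<And>s. s \<in> A \<Longrightarrow> restrict z (below s) \<in> restr_set X (below s)"
  shows "restrict z A \<in> restr_set X A"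
proof -
  have "\<forall>s\<in>A. \<exists>w. w \<in> topspace (cube \<zeta>) \<and> restrict (H w) (below s) = restrict z (below s)"
    using local by (metis restr_setE)
  then obtain ws where ws_cube: "\<And>s. s \<in> A \<Longrightarrow> ws s \<in> topspace (cube \<zeta>)"
    and ws_below: "\<And>s. s \<in> A \<Longrightarrow> restrict (H (ws s)) (below s) = restrict z (below s)"
    by metis
  \<comment> \<open>Since H reflects equality below t, the preimages ws t and ws s agree below a common
    prefix t, so they combine into a single preimage w.\<close>
  define w where "w = cube_extend \<zeta> A (\<lambda>t. ws t t)"
  have w_cube: "w \<in> topspace (cube \<zeta>)"
    by (simp add: w_def cube_extend_in_cube)
  have w_below: "restrict w (below s) = restrict (ws s) (below s)" if s: "s \<in> A" for s
  proof (rule restrict_ext)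
    fix t assume t: "t \<in> below s"
    have tA: "t \<in> A"
      using t Xi_below_subset[OF A(1) s] by blast
    have "restrict (H (ws t)) (below t) = restrict (H (ws s)) (below t)"
      using ws_below[OF tA] restrict_eq_subset[OF below_subset_below[OF t] ws_below[OF s]]
      by simp
    then have "restrict (ws t) (below t) = restrict (ws s) (below t)"
      using H_restrict_below_eq_iff ws_cube tA s A(2) by blast
    then have "ws t t = ws s t"
      using self_in_below[OF Xi_nonempty_node[OF A(1) tA]] by (metis restrict_apply')
    then show "w t = ws s t"
      using tA A(2) by (auto simp: w_def cube_extend_def)
  qed
  have "restrict (H w) (below s) = restrict z (below s)" if s: "s \<in> A" for s
  proof -
    have "restrict (H w) (below s) = restrict (H (ws s)) (below s)"
      using H_restrict_below_eq_iff[OF w_cube ws_cube[OF s]] w_below[OF s] s A(2) by blast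
    then show ?thesis
      using ws_below[OF s] by simp
  qed
  then have "restrict (H w) A = restrict z A"
    using restrict_eq_iff_below[OF A(1)] by blast
  then show ?thesis
    using restrict_in_restr_set[OF w_cube] by metis
qed

lemma restrict_in_iff_below:
  "restrict z \<zeta> \<in> X \<longleftrightarrow> (\<forall>s\<in>\<zeta>. restrict z (below s) \<in> restr_set X (below s))"
proof
  assume z: "restrict z \<zeta> \<in> X"
  show "\<forall>s\<in>\<zeta>. restrict z (below s) \<in> restr_set X (below s)"
  proof
    fix s assume "s \<in> \<zeta>"
    then have "restrict z (below s) = restrict (restrict z \<zeta>) (below s)"
      using Xi_below_subset[OF Xi] by (simp add: Int_absorb1)
    then show "restrict z (below s) \<in> restr_set X (below s)"
      using z unfolding restr_set_def by blast
  qed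
next
  assume "\<forall>s\<in>\<zeta>. restrict z (below s) \<in> restr_set X (below s)"
  then show "restrict z \<zeta> \<in> X"
    using restrict_in_restr_setI[OF Xi order_refl] restr_set_self[OF subset_cube] by simp
qed

definition restriction_map :: "'a list set \<Rightarrow> ('a list \<Rightarrow> nat \<Rightarrow> bool) \<Rightarrow> 'a list \<Rightarrow> nat \<Rightarrow> bool"
  where "restriction_map A v = restrict (H (cube_extend \<zeta> A v)) A"

lemma restriction_map_restrict:
  assumes "A \<in> Xi" "A \<subseteq> \<zeta>" "w \<in> topspace (cube \<zeta>)"
  shows "restriction_map A (restrict w A) = restrict (H w) A"
  using H_restrict_eq_iff[OF cube_extend_in_cube assms(3) assms(1,2)] restrict_cube_extend[OF assms(2)]
  unfolding restriction_map_def by simp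

lemma homeomorphic_map_restriction_map:
  assumes A: "A \<in> Xi" "A \<subseteq> \<zeta>"
  shows "homeomorphic_map (cube A) (subtopology (cube A) (restr_set X A)) (restriction_map A)"
proof (rule homeomorphic_map_cube_onto)
  show "continuous_map (cube A) (cube A) (restriction_map A)"
    unfolding restriction_map_def
    using continuous_map_compose[OF continuous_map_compose[OF continuous_map_cube_extend[OF A(2)]
          continuous] continuous_map_cube_restrict[OF A(2)]]
    by (simp add: o_def)
  show "inj_on (restriction_map A) (topspace (cube A))"
  proof (rule inj_onI)
    fix v v' assume v: "v \<in> topspace (cube A)" "v' \<in> topspace (cube A)"
      and "restriction_map A v = restriction_map A v'"
    then have "restrict (cube_extend \<zeta> A v) A = restrict (cube_extend \<zeta> A v') A"
      using H_restrict_eq_iff[OF cube_extend_in_cube cube_extend_in_cube A]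
      unfolding restriction_map_def by blast
    then show "v = v'"
      using v by (simp add: restrict_cube_extend[OF A(2)] restrict_cube_self)
  qed
  show "restriction_map A ` topspace (cube A) = restr_set X A"
  proof
    show "restriction_map A ` topspace (cube A) \<subseteq> restr_set X A"
      unfolding restriction_map_def using restrict_in_restr_set[OF cube_extend_in_cube] by blast
    show "restr_set X A \<subseteq> restriction_map A ` topspace (cube A)"
    proof
      fix u assume "u \<in> restr_set X A"
      then obtain w where "w \<in> topspace (cube \<zeta>)" "u = restrict (H w) A"
        by (rule restr_setE)
      then show "u \<in> restriction_map A ` topspace (cube A)"
        using restriction_map_restrict[OF A] restrict_in_cube by (metis image_eqI)
    qed
  qed
qed

definition restriction_inverse :: "'a list set \<Rightarrow> ('a list \<Rightarrow> nat \<Rightarrow> bool) \<Rightarrow> 'a list \<Rightarrow> nat \<Rightarrow> bool"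
  where "restriction_inverse A =
    (SOME g. homeomorphic_maps (cube A) (subtopology (cube A) (restr_set X A)) (restriction_map A) g)"

lemma homeomorphic_maps_restriction_inverse:
  assumes "A \<in> Xi" "A \<subseteq> \<zeta>"
  shows "homeomorphic_maps (cube A) (subtopology (cube A) (restr_set X A))
    (restriction_map A) (restriction_inverse A)"
  using homeomorphic_map_restriction_map[OF assms] unfolding homeomorphic_map_maps restriction_inverse_def
  by (rule someI_ex)

lemma continuous_map_restriction_inverse:
  assumes "A \<in> Xi" "A \<subseteq> \<zeta>"
  shows "continuous_map (subtopology (cube A) (restr_set X A)) (cube A) (restriction_inverse A)"
  using homeomorphic_maps_restriction_inverse[OF assms] by (simp add: homeomorphic_maps_def)

lemma restriction_inverse_restrict:
  assumes "A \<in> Xi" "A \<subseteq> \<zeta>" "w \<in> topspace (cube \<zeta>)"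
  shows "restriction_inverse A (restrict (H w) A) = restrict w A"
  using homeomorphic_maps_restriction_inverse[OF assms(1,2)] restriction_map_restrict[OF assms]
  by (metis homeomorphic_maps_def restrict_in_cube)

definition glue :: "'a list \<Rightarrow> ('a list \<Rightarrow> nat \<Rightarrow> bool) \<Rightarrow> (nat \<Rightarrow> bool) \<Rightarrow> 'a list \<Rightarrow> nat \<Rightarrow> bool"
  where "glue s v d = (cube_extend \<zeta> (strictly_below s) v)(s := d)"

text \<open>The value at s of the point of X that lies over y strictly below s and is the
  image of a point with coordinate d at s.\<close>

definition fiber :: "'a list \<Rightarrow> ('a list \<Rightarrow> nat \<Rightarrow> bool) \<Rightarrow> (nat \<Rightarrow> bool) \<Rightarrow> nat \<Rightarrow> bool"
  where "fiber s y d =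
    H (glue s (restriction_inverse (strictly_below s) (restrict y (strictly_below s))) d) s"

lemma glue_in_cube: "s \<in> \<zeta> \<Longrightarrow> glue s v d \<in> topspace (cube \<zeta>)"
  using cube_extend_in_cube[of \<zeta> "strictly_below s" v]
  by (auto simp: glue_def topspace_cube PiE_def extensional_def)

lemma restrict_glue:
  "s \<in> \<zeta> \<Longrightarrow> restrict (glue s v d) (strictly_below s) = restrict v (strictly_below s)"
  using restrict_cube_extend[OF strictly_below_subset]
  by (simp add: glue_def restrict_fupd[OF not_in_strictly_below])

lemma glue_at: "glue s v d s = d"
  by (simp add: glue_def)

lemma restrict_below_glue:
  assumes "s \<in> \<zeta>"
  shows "restrict (glue s (restrict w (strictly_below s)) d) (below s) = restrict (w(s := d)) (below s)"
  using restrict_glue[OF assms]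
  by (simp add: restrict_below_eq_iff[OF nonempty_node[OF assms]] glue_at
      restrict_fupd[OF not_in_strictly_below])

lemma fiber_cong:
  "restrict y (strictly_below s) = restrict y' (strictly_below s) \<Longrightarrow> fiber s y d = fiber s y' d"
  by (simp add: fiber_def)

lemma fiber_eq:
  assumes "s \<in> \<zeta>" "w \<in> topspace (cube \<zeta>)"
    and "restrict y (strictly_below s) = restrict (H w) (strictly_below s)"
  shows "fiber s y d = H (glue s (restrict w (strictly_below s)) d) s"
  using restriction_inverse_restrict[OF strictly_below_in_Xi strictly_below_subset[OF assms(1)] assms(2)]
  by (simp add: fiber_def assms(3))

lemma restrict_H_glue:
  assumes "s \<in> \<zeta>" "w \<in> topspace (cube \<zeta>)"
  shows "restrict (H (glue s (restrict w (strictly_below s)) d)) (strictly_below s) =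
    restrict (H w) (strictly_below s)"
proof -
  have "restrict (glue s (restrict w (strictly_below s)) d) (strictly_below s) =
      restrict w (strictly_below s)"
    using restrict_glue[OF assms(1)] by simp
  then show ?thesis
    using H_restrict_eq_iff[OF glue_in_cube[OF assms(1)] assms(2) strictly_below_in_Xi
        strictly_below_subset[OF assms(1)]]
    by blast
qed

lemma restrict_below_in_restr_set_iff:
  assumes s: "s \<in> \<zeta>"
  shows "restrict z (below s) \<in> restr_set X (below s) \<longleftrightarrow>
    restrict z (strictly_below s) \<in> restr_set X (strictly_below s) \<and> (\<exists>d. fiber s z d = z s)"
proof
  assume "restrict z (below s) \<in> restr_set X (below s)"
  then obtain w where w: "w \<in> topspace (cube \<zeta>)" "restrict z (below s) = restrict (H w) (below s)"
    by (rule restr_setE)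
  then have z_strict: "restrict z (strictly_below s) = restrict (H w) (strictly_below s)"
    using restrict_below_eq_iff[OF nonempty_node[OF s]] by blast
  have "restrict (glue s (restrict w (strictly_below s)) (w s)) (below s) = restrict w (below s)"
    using restrict_below_glue[OF s] by simp
  then have "H (glue s (restrict w (strictly_below s)) (w s)) s = H w s"
    using H_restrict_below_eq_iff[OF glue_in_cube[OF s] w(1) s] self_in_below[OF nonempty_node[OF s]]
    by (metis restrict_apply')
  also have "\<dots> = z s"
    using w(2) self_in_below[OF nonempty_node[OF s]] by (metis restrict_apply')
  finally have "fiber s z (w s) = z s"
    using fiber_eq[OF s w(1) z_strict] by simp
  then show "restrict z (strictly_below s) \<in> restr_set X (strictly_below s) \<and> (\<exists>d. fiber s z d = z s)"
    using z_strict restrict_in_restr_set[OF w(1)] by metis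
next
  assume "restrict z (strictly_below s) \<in> restr_set X (strictly_below s) \<and> (\<exists>d. fiber s z d = z s)"
  then obtain w d where w: "w \<in> topspace (cube \<zeta>)"
      "restrict z (strictly_below s) = restrict (H w) (strictly_below s)"
    and d: "fiber s z d = z s"
    by (metis restr_setE)
  define w' where "w' = glue s (restrict w (strictly_below s)) d"
  have "restrict (H w') (strictly_below s) = restrict z (strictly_below s)"
    using restrict_H_glue[OF s w(1)] w(2) by (simp add: w'_def)
  moreover have "H w' s = z s"
    using fiber_eq[OF s w] d by (simp add: w'_def)
  ultimately have "restrict z (below s) = restrict (H w') (below s)"
    using restrict_below_eq_iff[OF nonempty_node[OF s]] by metis
  then show "restrict z (below s) \<in> restr_set X (below s)"
    using restrict_in_restr_set[OF glue_in_cube[OF s]] by (simp add: w'_def)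
qed

lemma fiber_inj:
  assumes s: "s \<in> \<zeta>" and z: "restrict z (strictly_below s) \<in> restr_set X (strictly_below s)"
    and eq: "fiber s z d = fiber s z d'"
  shows "d = d'"
proof -
  obtain w where w: "w \<in> topspace (cube \<zeta>)"
    "restrict z (strictly_below s) = restrict (H w) (strictly_below s)"
    using z by (rule restr_setE)
  let ?w1 = "glue s (restrict w (strictly_below s)) d"
  let ?w2 = "glue s (restrict w (strictly_below s)) d'"
  have "restrict (H ?w1) (below s) = restrict (H ?w2) (below s)"
    using restrict_H_glue[OF s w(1)] fiber_eq[OF s w] eq
    by (simp add: restrict_below_eq_iff[OF nonempty_node[OF s]])
  then have "restrict ?w1 (below s) = restrict ?w2 (below s)"
    using H_restrict_below_eq_iff[OF glue_in_cube glue_in_cube s] s by blast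
  then show "d = d'"
    using restrict_below_glue[OF s] by (simp add: restrict_below_eq_iff[OF nonempty_node[OF s]])
qed

lemma continuous_map_fiber:
  assumes s: "s \<in> \<zeta>"
    and y: "continuous_map U (subtopology (cube (strictly_below s)) (restr_set X (strictly_below s)))
      (\<lambda>x. restrict (y x) (strictly_below s))"
    and q: "continuous_map U Dtop q"
  shows "continuous_map U Dtop (\<lambda>x. fiber s (y x) (q x))"
proof -
  have "continuous_map U (cube (strictly_below s))
      (\<lambda>x. restriction_inverse (strictly_below s) (restrict (y x) (strictly_below s)))"
    using continuous_map_compose[OF y continuous_map_restriction_inverse[OF strictly_below_in_Xi
          strictly_below_subset[OF s]]]
    by (simp add: o_def)
  then have "continuous_map U (cube \<zeta>)
      (\<lambda>x. glue s (restriction_inverse (strictly_below s) (restrict (y x) (strictly_below s))) (q x))"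
    unfolding glue_def
    using continuous_map_compose[OF _ continuous_map_cube_extend[OF strictly_below_subset[OF s]]]
    by (intro continuous_map_cube_fun_upd[OF _ q s]) (simp add: o_def)
  then show ?thesis
    unfolding fiber_def
    using continuous_map_compose[OF continuous_map_compose[OF _ continuous]
        continuous_map_cube_coordinate[OF s]]
    by (simp add: o_def)
qed

end

definition tree_rec :: "('a list \<Rightarrow> ('a list \<Rightarrow> 'b) \<Rightarrow> 'c \<Rightarrow> 'b) \<Rightarrow> 'a list set
    \<Rightarrow> ('a list \<Rightarrow> 'c) \<Rightarrow> 'a list \<Rightarrow> 'b" where
  "tree_rec F V x = wfrec (Wellfounded.measure length) (\<lambda>f s. if s \<in> V then F s f (x s) else undefined)"

lemma tree_rec_eq:
  assumes F_cong: "\<And>s y y' d. restrict y (strictly_below s) = restrict y' (strictly_below s) \<Longrightarrow>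
    F s y d = F s y' d"
  shows "tree_rec F V x s = (if s \<in> V then F s (tree_rec F V x) (x s) else undefined)"
proof -
  let ?step = "\<lambda>f s. if s \<in> V then F s f (x s) else undefined"
  have "adm_wf (Wellfounded.measure length) ?step"
    unfolding adm_wf_def
  proof (intro allI impI)
    fix f g :: "'a list \<Rightarrow> 'b" and s
    assume shorter: "\<forall>t. (t, s) \<in> Wellfounded.measure length \<longrightarrow> f t = g t"
    have "f t = g t" if "t \<in> strictly_below s" for t
      using shorter length_strictly_below[OF that] by simp
    then have "restrict f (strictly_below s) = restrict g (strictly_below s)"
      by (rule restrict_ext)
    then show "?step f s = ?step g s"
      using F_cong by metis
  qed
  then have "tree_rec F V x = ?step (tree_rec F V x)"
    unfolding tree_rec_def by (rule wfrec_fixpoint[OF wf_measure])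
  from fun_cong[OF this, of s] show ?thesis
    by simp
qed

section \<open>Amalgamating a coherent family\<close>

locale coherent_ips_family =
  fixes \<xi>s :: "nat \<Rightarrow> 'a list set" and Xs :: "nat \<Rightarrow> ('a list \<Rightarrow> nat \<Rightarrow> bool) set"
    and Hs :: "nat \<Rightarrow> ('a list \<Rightarrow> nat \<Rightarrow> bool) \<Rightarrow> 'a list \<Rightarrow> nat \<Rightarrow> bool"
  assumes witness: "\<And>n. ips_witness (\<xi>s n) (Xs n) (Hs n)"
    and coherent: "\<And>k n. restr_set (Xs n) (\<xi>s k \<inter> \<xi>s n) = restr_set (Xs k) (\<xi>s k \<inter> \<xi>s n)"
begin

definition \<theta> :: "'a list set" where
  "\<theta> = (\<Union>n. \<xi>s n)"

definition X :: "('a list \<Rightarrow> nat \<Rightarrow> bool) set" where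
  "X = (\<Inter>n. lift_set (Xs n) (\<xi>s n) \<theta>)"

definition index :: "'a list \<Rightarrow> nat" where
  "index s = (LEAST n. s \<in> \<xi>s n)"

text \<open>Any n with s \<in> \<xi>s n would do, since by coherence the sets Xs n agree below s
  (lemma restr_set_below_eq).\<close>

definition local_fiber :: "'a list \<Rightarrow> ('a list \<Rightarrow> nat \<Rightarrow> bool) \<Rightarrow> (nat \<Rightarrow> bool) \<Rightarrow> nat \<Rightarrow> bool"
  where "local_fiber s = ips_witness.fiber (\<xi>s (index s)) (Xs (index s)) (Hs (index s)) s"

definition H :: "('a list \<Rightarrow> nat \<Rightarrow> bool) \<Rightarrow> 'a list \<Rightarrow> nat \<Rightarrow> bool" where
  "H = tree_rec local_fiber \<theta>"

lemma \<xi>s_subset_\<theta>: "\<xi>s n \<subseteq> \<theta>"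
  by (auto simp: \<theta>_def)

lemma \<theta>_in_Xi: "\<theta> \<in> Xi"
  unfolding \<theta>_def using UN_in_Xi ips_witness.Xi[OF witness] by blast

lemma index_mem: "s \<in> \<theta> \<Longrightarrow> s \<in> \<xi>s (index s)"
  unfolding \<theta>_def index_def by (auto intro: LeastI)

lemma restr_set_below_eq:
  assumes "s \<in> \<xi>s m" "s \<in> \<xi>s n"
  shows "restr_set (Xs m) (below s) = restr_set (Xs n) (below s)"
proof -
  have sub: "below s \<subseteq> \<xi>s n \<inter> \<xi>s m"
    using assms Xi_below_subset[OF ips_witness.Xi[OF witness]] by blast
  then have "restr_set (Xs m) (below s) = restr_set (restr_set (Xs m) (\<xi>s n \<inter> \<xi>s m)) (below s)"
    by (simp add: restr_set_restr_set)
  also have "\<dots> = restr_set (restr_set (Xs n) (\<xi>s n \<inter> \<xi>s m)) (below s)"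
    using coherent by metis
  also have "\<dots> = restr_set (Xs n) (below s)"
    using sub by (simp add: restr_set_restr_set)
  finally show ?thesis .
qed

lemma X_iff:
  "z \<in> X \<longleftrightarrow> z \<in> topspace (cube \<theta>) \<and>
    (\<forall>n. \<forall>s\<in>\<xi>s n. restrict z (below s) \<in> restr_set (Xs n) (below s))"
  unfolding X_def lift_set_def using ips_witness.restrict_in_iff_below[OF witness] by blast

lemma H_eq: "H x s = (if s \<in> \<theta> then local_fiber s (H x) (x s) else undefined)"
  unfolding H_def local_fiber_def
  by (rule tree_rec_eq, rule ips_witness.fiber_cong[OF witness])

lemma H_in_cube: "H x \<in> topspace (cube \<theta>)"
  using H_eq[of x] by (auto simp: topspace_cube PiE_def extensional_def)

lemma restrict_H_below_in:
  "s \<in> \<theta> \<Longrightarrow> restrict (H x) (below s) \<in> restr_set (Xs (index s)) (below s)"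
proof (induction s rule: strictly_below_induct)
  case (below s)
  define n where "n = index s"
  interpret W: ips_witness "\<xi>s n" "Xs n" "Hs n" by (rule witness)
  have s: "s \<in> \<xi>s n"
    using index_mem[OF below.prems] by (simp add: n_def)
  have "restrict (H x) (below t) \<in> restr_set (Xs n) (below t)" if t: "t \<in> strictly_below s" for t
  proof -
    have "t \<in> \<xi>s n"
      using W.strictly_below_subset[OF s] t by blast
    then show ?thesis
      using below.IH[OF t] \<xi>s_subset_\<theta> restr_set_below_eq[OF index_mem] by blast
  qed
  then have "restrict (H x) (strictly_below s) \<in> restr_set (Xs n) (strictly_below s)"
    by (rule W.restrict_in_restr_setI[OF strictly_below_in_Xi W.strictly_below_subset[OF s]])
  moreover have "W.fiber s (H x) (x s) = H x s"
    using H_eq[of x s] below.prems by (simp add: local_fiber_def n_def)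
  ultimately have "restrict (H x) (below s) \<in> restr_set (Xs n) (below s)"
    using W.restrict_below_in_restr_set_iff[OF s] by blast
  then show ?case
    by (simp only: n_def)
qed

lemma restrict_H_strictly_below_in:
  assumes "s \<in> \<theta>"
  shows "restrict (H x) (strictly_below s) \<in> restr_set (Xs (index s)) (strictly_below s)"
  using restrict_H_below_in[OF assms]
    ips_witness.restrict_below_in_restr_set_iff[OF witness index_mem[OF assms]]
  by blast

lemma H_in_X: "H x \<in> X"
  unfolding X_iff
proof (intro conjI allI ballI H_in_cube)
  fix n s assume "s \<in> \<xi>s n"
  then show "restrict (H x) (below s) \<in> restr_set (Xs n) (below s)"
    using restrict_H_below_in \<xi>s_subset_\<theta> restr_set_below_eq[OF index_mem] by blast
qed

lemma H_restrict_below_eq_iff: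
  "s \<in> \<theta> \<Longrightarrow> restrict (H x0) (below s) = restrict (H x1) (below s) \<longleftrightarrow>
    restrict x0 (below s) = restrict x1 (below s)"
proof (induction s rule: strictly_below_induct)
  case (below s)
  define n where "n = index s"
  interpret W: ips_witness "\<xi>s n" "Xs n" "Hs n" by (rule witness)
  have s: "s \<in> \<xi>s n"
    using index_mem[OF below.prems] by (simp add: n_def)
  have "strictly_below s \<subseteq> \<theta>"
    using W.strictly_below_subset[OF s] \<xi>s_subset_\<theta> by blast
  then have "(\<forall>t\<in>strictly_below s. restrict (H x0) (below t) = restrict (H x1) (below t)) \<longleftrightarrow>
      (\<forall>t\<in>strictly_below s. restrict x0 (below t) = restrict x1 (below t))"
    using below.IH by blast
  then have strict_iff: "restrict (H x0) (strictly_below s) = restrict (H x1) (strictly_below s) \<longleftrightarrow>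
      restrict x0 (strictly_below s) = restrict x1 (strictly_below s)"
    by (simp only: restrict_eq_iff_below[OF strictly_below_in_Xi])
  have value_iff: "H x0 s = H x1 s \<longleftrightarrow> x0 s = x1 s"
    if H_strict: "restrict (H x1) (strictly_below s) = restrict (H x0) (strictly_below s)"
  proof -
    have "H x0 s = W.fiber s (H x0) (x0 s)" "H x1 s = W.fiber s (H x0) (x1 s)"
      using H_eq[of _ s] below.prems W.fiber_cong[OF H_strict]
      by (simp_all add: local_fiber_def n_def)
    moreover have "restrict (H x0) (strictly_below s) \<in> restr_set (Xs n) (strictly_below s)"
      using restrict_H_strictly_below_in[OF below.prems] by (simp only: n_def)
    ultimately show ?thesis
      using W.fiber_inj[OF s] by metis
  qed
  have "restrict (H x0) (below s) = restrict (H x1) (below s) \<longleftrightarrow>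
      restrict (H x0) (strictly_below s) = restrict (H x1) (strictly_below s) \<and> H x0 s = H x1 s"
    by (rule restrict_below_eq_iff[OF W.nonempty_node[OF s]])
  also have "\<dots> \<longleftrightarrow> restrict x0 (strictly_below s) = restrict x1 (strictly_below s) \<and> x0 s = x1 s"
    using strict_iff value_iff by metis
  also have "\<dots> \<longleftrightarrow> restrict x0 (below s) = restrict x1 (below s)"
    by (rule restrict_below_eq_iff[OF W.nonempty_node[OF s], symmetric])
  finally show ?case .
qed

lemma H_restrict_eq_iff:
  assumes "\<xi> \<in> Xi" "\<xi> \<subseteq> \<theta>"
  shows "restrict (H x0) \<xi> = restrict (H x1) \<xi> \<longleftrightarrow> restrict x0 \<xi> = restrict x1 \<xi>"
proof -
  have "\<forall>s\<in>\<xi>. restrict (H x0) (below s) = restrict (H x1) (below s) \<longleftrightarrow>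
      restrict x0 (below s) = restrict x1 (below s)"
    using assms(2) H_restrict_below_eq_iff by blast
  then show ?thesis
    unfolding restrict_eq_iff_below[OF assms(1)] by blast
qed

lemma H_realizes:
  assumes S: "S \<in> Xi" "S \<subseteq> \<theta>"
    and z: "\<And>s. s \<in> S \<Longrightarrow> restrict z (below s) \<in> restr_set (Xs (index s)) (below s)"
  obtains x where "x \<in> topspace (cube \<theta>)" "restrict (H x) S = restrict z S"
proof -
  define x where
    "x = restrict (\<lambda>s. if s \<in> S then (SOME d. local_fiber s z d = z s) else (\<lambda>_. False)) \<theta>"
  have "H x s = z s" if "s \<in> S" for s
    using that
  proof (induction s rule: strictly_below_induct)
    case (below s)
    define n where "n = index s"
    interpret W: ips_witness "\<xi>s n" "Xs n" "Hs n" by (rule witness)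
    have s\<theta>: "s \<in> \<theta>"
      using below.prems S(2) by blast
    have s: "s \<in> \<xi>s n"
      using index_mem[OF s\<theta>] by (simp add: n_def)
    have "strictly_below s \<subseteq> S"
      using Xi_below_subset[OF S(1) below.prems] strictly_below_subset_below by blast
    then have H_strict: "restrict (H x) (strictly_below s) = restrict z (strictly_below s)"
      using below.IH by (intro restrict_ext) blast
    have "H x s = local_fiber s z (x s)"
      using H_eq[of x s] s\<theta> W.fiber_cong[OF H_strict] by (simp add: local_fiber_def n_def)
    also have "\<dots> = z s"
    proof -
      have "\<exists>d. local_fiber s z d = z s"
        using z[OF below.prems] W.restrict_below_in_restr_set_iff[OF s]
        by (simp add: local_fiber_def n_def)
      moreover have "x s = (SOME d. local_fiber s z d = z s)"
        using below.prems s\<theta> by (simp add: x_def)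
      ultimately show ?thesis
        using someI_ex[of "\<lambda>d. local_fiber s z d = z s"] by simp
    qed
    finally show ?case .
  qed
  then have "restrict (H x) S = restrict z S"
    by (rule restrict_ext)
  then show thesis
    using that[of x] by (simp add: x_def)
qed

lemma continuous_map_H_coordinate:
  "s \<in> \<theta> \<Longrightarrow> continuous_map (cube \<theta>) Dtop (\<lambda>x. H x s)"
proof (induction s rule: strictly_below_induct)
  case (below s)
  define n where "n = index s"
  interpret W: ips_witness "\<xi>s n" "Xs n" "Hs n" by (rule witness)
  have s: "s \<in> \<xi>s n"
    using index_mem[OF below.prems] by (simp add: n_def)
  have "continuous_map (cube \<theta>) (cube (strictly_below s)) (\<lambda>x. restrict (H x) (strictly_below s))"
  proof (rule continuous_map_cubeI)
    fix t assume t: "t \<in> strictly_below s"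
    then have "t \<in> \<theta>"
      using W.strictly_below_subset[OF s] \<xi>s_subset_\<theta> by blast
    then show "continuous_map (cube \<theta>) Dtop (\<lambda>x. restrict (H x) (strictly_below s) t)"
      using below.IH[OF t] t by simp
  qed simp
  then have "continuous_map (cube \<theta>)
      (subtopology (cube (strictly_below s)) (restr_set (Xs n) (strictly_below s)))
      (\<lambda>x. restrict (H x) (strictly_below s))"
    using restrict_H_strictly_below_in[OF below.prems]
    by (auto simp: continuous_map_in_subtopology n_def)
  then have "continuous_map (cube \<theta>) Dtop (\<lambda>x. W.fiber s (H x) (x s))"
    by (rule W.continuous_map_fiber[OF s _ continuous_map_cube_coordinate[OF below.prems]])
  then show ?case
    by (rule continuous_map_eq) (simp add: H_eq[of _ s] below.prems local_fiber_def n_def)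
qed

lemma continuous_map_H: "continuous_map (cube \<theta>) (cube \<theta>) H"
  using H_in_cube continuous_map_H_coordinate
  by (intro continuous_map_cubeI) (auto simp: topspace_cube PiE_def)

lemma H_image: "H ` topspace (cube \<theta>) = X"
proof
  show "H ` topspace (cube \<theta>) \<subseteq> X"
    using H_in_X by blast
  show "X \<subseteq> H ` topspace (cube \<theta>)"
  proof
    fix z assume z: "z \<in> X"
    then have "restrict z (below s) \<in> restr_set (Xs (index s)) (below s)" if "s \<in> \<theta>" for s
      using X_iff index_mem[OF that] by blast
    then obtain x where x: "x \<in> topspace (cube \<theta>)" "restrict (H x) \<theta> = restrict z \<theta>"
      using H_realizes[OF \<theta>_in_Xi order_refl] by blast
    then have "H x = z"
      using z X_iff H_in_cube by (metis restrict_cube_self)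
    then show "z \<in> H ` topspace (cube \<theta>)"
      using x(1) by blast
  qed
qed

lemma inj_on_H: "inj_on H (topspace (cube \<theta>))"
proof (rule inj_onI)
  fix x0 x1 assume "x0 \<in> topspace (cube \<theta>)" "x1 \<in> topspace (cube \<theta>)" "H x0 = H x1"
  then show "x0 = x1"
    using H_restrict_eq_iff[OF \<theta>_in_Xi order_refl, of x0 x1] by (metis restrict_cube_self)
qed

lemma X_in_IPS: "X \<in> IPS \<theta>"
  unfolding IPS_iff ips_map_def
proof (intro conjI exI ballI impI)
  show "X \<subseteq> topspace (cube \<theta>)"
    using X_iff by blast
  show "homeomorphic_map (cube \<theta>) (subtopology (cube \<theta>) X) H"
    by (rule homeomorphic_map_cube_onto[OF continuous_map_H inj_on_H H_image])
  fix x0 x1 \<xi> assume "\<xi> \<in> Xi" "\<xi> \<subseteq> \<theta>"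
  then show "restrict x0 \<xi> = restrict x1 \<xi> \<longleftrightarrow> restrict (H x0) \<xi> = restrict (H x1) \<xi>"
    using H_restrict_eq_iff by blast
qed

lemma restr_set_X: "restr_set X (\<xi>s n) = Xs n"
proof
  show "restr_set X (\<xi>s n) \<subseteq> Xs n"
    by (auto simp: restr_set_def X_def lift_set_def)
  show "Xs n \<subseteq> restr_set X (\<xi>s n)"
  proof
    fix z assume z: "z \<in> Xs n"
    interpret W: ips_witness "\<xi>s n" "Xs n" "Hs n" by (rule witness)
    have "restrict z (below s) \<in> restr_set (Xs (index s)) (below s)" if "s \<in> \<xi>s n" for s
      using z that \<xi>s_subset_\<theta> restr_set_below_eq[OF that index_mem]
      unfolding restr_set_def by blast
    then obtain x where "restrict (H x) (\<xi>s n) = restrict z (\<xi>s n)"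
      using H_realizes[OF W.Xi \<xi>s_subset_\<theta>] by blast
    then have "z = restrict (H x) (\<xi>s n)"
      using z W.subset_cube by (auto simp: restrict_cube_self)
    then show "z \<in> restr_set X (\<xi>s n)"
      using H_in_X unfolding restr_set_def by blast
  qed
qed

end

theorem lemma2p26:
  fixes \<xi>s :: "nat \<Rightarrow> 'a list set"
    and Xs :: "nat \<Rightarrow> ('a list \<Rightarrow> nat \<Rightarrow> bool) set"
  assumes xi: "\<And>n. \<xi>s n \<in> Xi"
    and ips: "\<And>n. Xs n \<in> IPS (\<xi>s n)"
  shows "((\<forall>k n. restr_set (Xs n) (\<xi>s k \<inter> \<xi>s n) = restr_set (Xs k) (\<xi>s k \<inter> \<xi>s n)) \<longrightarrow>
           (\<Inter>n. lift_set (Xs n) (\<xi>s n) (\<Union>m. \<xi>s m)) \<in> IPS (\<Union>m. \<xi>s m) \<and>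
           (\<forall>n. restr_set (\<Inter>k. lift_set (Xs k) (\<xi>s k) (\<Union>m. \<xi>s m)) (\<xi>s n) = Xs n)) \<and>
         ((\<forall>k n. k \<noteq> n \<longrightarrow> \<xi>s k \<inter> \<xi>s n = {}) \<longrightarrow>
           (\<forall>k n. restr_set (Xs n) (\<xi>s k \<inter> \<xi>s n) = restr_set (Xs k) (\<xi>s k \<inter> \<xi>s n)) \<and>
           (\<Inter>n. lift_set (Xs n) (\<xi>s n) (\<Union>m. \<xi>s m)) \<in> IPS (\<Union>m. \<xi>s m) \<and>
           (\<forall>n. restr_set (\<Inter>k. lift_set (Xs k) (\<xi>s k) (\<Union>m. \<xi>s m)) (\<xi>s n) = Xs n))"
proof -
  have "\<forall>n. \<exists>H. ips_witness (\<xi>s n) (Xs n) H"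
    using xi ips by (simp add: IPS_iff ips_witness_def)
  then obtain Hs where Hs: "\<And>n. ips_witness (\<xi>s n) (Xs n) (Hs n)"
    by metis
  have amalgamation: "(\<Inter>n. lift_set (Xs n) (\<xi>s n) (\<Union>m. \<xi>s m)) \<in> IPS (\<Union>m. \<xi>s m) \<and>
      (\<forall>n. restr_set (\<Inter>k. lift_set (Xs k) (\<xi>s k) (\<Union>m. \<xi>s m)) (\<xi>s n) = Xs n)"
    if "\<forall>k n. restr_set (Xs n) (\<xi>s k \<inter> \<xi>s n) = restr_set (Xs k) (\<xi>s k \<inter> \<xi>s n)"
  proof -
    interpret coherent_ips_family \<xi>s Xs Hs
      by (rule coherent_ips_family.intro[OF Hs]) (use that in blast)
    show ?thesis
      using X_in_IPS restr_set_X unfolding X_def \<theta>_def by blast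
  qed
  have "\<forall>k n. restr_set (Xs n) (\<xi>s k \<inter> \<xi>s n) = restr_set (Xs k) (\<xi>s k \<inter> \<xi>s n)"
    if "\<forall>k n. k \<noteq> n \<longrightarrow> \<xi>s k \<inter> \<xi>s n = {}"
    using that restr_set_empty ips_witness.nonempty[OF Hs] by metis
  then show ?thesis
    using amalgamation by blast
qed

end
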